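(* Let $\lambda>0$ and $K(\sigma,\tau)=\exp(-\lambda d(\sigma,\tau))$ (Mallows kernel) on $S_n$. Let $R_i,R_j\subseteq S_n$ be top-$k$ partial rankings and $N,M\ge1$. Let $(\sigma_n)_{n=1}^N$ be i.i.d. uniform on $R_i$ and $(\tau_m)_{m=1}^M$ i.i.d. uniform on $R_j$, independent of each other. Consider two cases: (antithetic) $\widetilde\sigma_n=A_{R_i}(\sigma_n)$ and $\widetilde\tau_m=A_{R_j}(\tau_m)$; (i.i.d.) $(\widetilde\sigma_n)_{n=1}^N$ i.i.d. uniform on $R_i$ and $(\widetilde\tau_m)_{m=1}^M$ i.i.d. uniform on $R_j$, all independent of each other and of the $\sigma_n,\tau_m$. Let $$\widehat K(R_i,R_j)=\frac1{4NM}\sum_{n=1}^N\sum_{m=1}^M\big(K(\sigma_n,\tau_m)+K(\widetilde\sigma_n,\tau_m)+K(\sigma_n,\widetilde\tau_m)+K(\widetilde\sigma_n,\widetilde\tau_m)\big),$$ and let $V_{\mathrm{anti}}(N,M)$ and $V_{\mathrm{iid}}(N,M)$ denote its variance in the two cases. Then the estimator has the same mean in both cases, and there is a constant $C$ independent of $N,M$ such that $V_{\mathrm{anti}}(N,M)\le V_{\mathrm{iid}}(N,M)+C/(NM)$ for all $N,M$; i.e. the leading-order (order $1/N$ and $1/M$) part of the variance is no larger in the antithetic case.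
   Context: $S_n$ is the symmetric group on $[n]$; $\sigma\in S_n$ is identified with the full ranking $\sigma(1)\succ\cdots\succ\sigma(n)$. For distinct items $x,y$, $\{x,y\}$ is discordant for $\sigma,\tau$ if $(\sigma^{-1}(x)-\sigma^{-1}(y))(\tau^{-1}(x)-\tau^{-1}(y))<0$. The Kendall distance $d(\sigma,\tau)$ is the number of unordered discordant pairs. For $0\le k\le n$ and distinct $a_1,\dots,a_k\in[n]$, the top-$k$ partial ranking is the set $R=\{\sigma\in S_n:\sigma(i)=a_i,\ i\le k\}$ (different $R$'s may have different $k$). The antithetic operator $A_R:R\to R$ is $A_R(\sigma)(i)=a_i$ for $i\le k$ and $A_R(\sigma)(k+j)=\sigma(n+1-j)$ for $j=1,\dots,n-k$. *)

theory Defs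
  imports "HOL-Probability.Probability" "HOL-Combinatorics.Permutations"
begin

(* Permutations of [n] = {1..n}; sigma i is the item at rank i. *)

definition kendall :: "nat \<Rightarrow> (nat \<Rightarrow> nat) \<Rightarrow> (nat \<Rightarrow> nat) \<Rightarrow> nat" where
  "kendall n \<sigma> \<tau> = card {(x, y). x \<in> {1..n} \<and> y \<in> {1..n} \<and> x < y \<and>
     (int (inv \<sigma> x) - int (inv \<sigma> y)) * (int (inv \<tau> x) - int (inv \<tau> y)) < 0}"

definition mallows :: "real \<Rightarrow> nat \<Rightarrow> (nat \<Rightarrow> nat) \<Rightarrow> (nat \<Rightarrow> nat) \<Rightarrow> real" where
  "mallows lam n \<sigma> \<tau> = exp (- lam * real (kendall n \<sigma> \<tau>))"

definition topk_valid :: "nat \<Rightarrow> nat \<Rightarrow> (nat \<Rightarrow> nat) \<Rightarrow> bool" where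
  "topk_valid n k a \<longleftrightarrow> k \<le> n \<and> inj_on a {1..k} \<and> a ` {1..k} \<subseteq> {1..n}"

definition topk :: "nat \<Rightarrow> nat \<Rightarrow> (nat \<Rightarrow> nat) \<Rightarrow> (nat \<Rightarrow> nat) set" where
  "topk n k a = {\<sigma>. \<sigma> permutes {1..n} \<and> (\<forall>i\<in>{1..k}. \<sigma> i = a i)}"

definition antithetic :: "nat \<Rightarrow> nat \<Rightarrow> (nat \<Rightarrow> nat) \<Rightarrow> (nat \<Rightarrow> nat) \<Rightarrow> (nat \<Rightarrow> nat)" where
  "antithetic n k a \<sigma> = (\<lambda>i. if i \<in> {1..k} then a i
                               else if i \<in> {k+1..n} then \<sigma> (n + 1 - (i - k))
                               else i)"

definition Khat :: "real \<Rightarrow> nat \<Rightarrow> nat \<Rightarrow> nat \<Rightarrow>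
    (nat \<Rightarrow> nat \<Rightarrow> nat) \<Rightarrow> (nat \<Rightarrow> nat \<Rightarrow> nat) \<Rightarrow>
    (nat \<Rightarrow> nat \<Rightarrow> nat) \<Rightarrow> (nat \<Rightarrow> nat \<Rightarrow> nat) \<Rightarrow> real" where
  "Khat lam n N M \<sigma>s \<sigma>t \<tau>s \<tau>t =
     (1 / (4 * real N * real M)) *
     (\<Sum>p=1..N. \<Sum>q=1..M. mallows lam n (\<sigma>s p) (\<tau>s q) + mallows lam n (\<sigma>t p) (\<tau>s q)
                         + mallows lam n (\<sigma>s p) (\<tau>t q) + mallows lam n (\<sigma>t p) (\<tau>t q))"

definition iid_samples :: "nat \<Rightarrow> (nat \<Rightarrow> nat) set \<Rightarrow> (nat \<Rightarrow> nat \<Rightarrow> nat) pmf" where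
  "iid_samples N R = Pi_pmf {1..N} undefined (\<lambda>_. pmf_of_set R)"

definition anti_dist where
  "anti_dist n k1 a1 k2 a2 N M = pair_pmf (iid_samples N (topk n k1 a1)) (iid_samples M (topk n k2 a2))"

definition anti_est where
  "anti_est lam n k1 a1 k2 a2 N M = (\<lambda>(\<sigma>s, \<tau>s).
     Khat lam n N M \<sigma>s (\<lambda>p. antithetic n k1 a1 (\<sigma>s p)) \<tau>s (\<lambda>q. antithetic n k2 a2 (\<tau>s q)))"

definition iid_dist where
  "iid_dist n k1 a1 k2 a2 N M =
     pair_pmf (pair_pmf (iid_samples N (topk n k1 a1)) (iid_samples N (topk n k1 a1)))
              (pair_pmf (iid_samples M (topk n k2 a2)) (iid_samples M (topk n k2 a2)))"

definition iid_est where
  "iid_est lam n N M = (\<lambda>((\<sigma>s, \<sigma>t), (\<tau>s, \<tau>t)). Khat lam n N M \<sigma>s \<sigma>t \<tau>s \<tau>t)"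

definition V_anti where
  "V_anti lam n k1 a1 k2 a2 N M =
     measure_pmf.variance (anti_dist n k1 a1 k2 a2 N M) (anti_est lam n k1 a1 k2 a2 N M)"

definition V_iid where
  "V_iid lam n k1 a1 k2 a2 N M =
     measure_pmf.variance (iid_dist n k1 a1 k2 a2 N M) (iid_est lam n N M)"

end

theory Submission
  imports Defs
begin

text \<open>
  Write \<open>h(\<sigma>)\<close> for the Mallows kernel at \<open>\<sigma>\<close> averaged over the uniform \<open>\<tau> \<in> R\<^sub>j\<close>.
  The key fact is that \<open>h(\<sigma>) h(A \<sigma>)\<close> does not depend on \<open>\<sigma> \<in> R\<^sub>i\<close>: the elements of
  \<open>R\<^sub>i\<close> are connected by adjacent swaps of free positions, and such a swap of \<open>\<sigma>\<close> is mirrored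
  by an adjacent swap of \<open>A \<sigma>\<close>.  If one of the two swapped items is fixed in \<open>R\<^sub>j\<close>, their
  relative order is the same for every \<open>\<tau> \<in> R\<^sub>j\<close>, so the two averages change by the reciprocal
  factors \<open>exp \<lambda>\<close> and \<open>exp (-\<lambda>)\<close>; otherwise relabelling the two items maps \<open>R\<^sub>j\<close> onto itself and neither
  average changes.

  The variance of the estimator with symmetrised kernel \<open>F\<close> equals
  \<open>(s + (N-1) b + (M-1) a - (N+M-1) m\<^sup>2) / (16 N M)\<close>, where \<open>m\<close> is the mean
  and \<open>a, b, s\<close> are the second moments of the two conditional means and of \<open>F\<close>.  The antithetic
  coupling does not change \<open>m\<close>, and by AM-GM \<open>E[h(\<sigma>) h(A \<sigma>)] \<le> (E h)\<^sup>2\<close>, which makes \<open>a\<close>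
  and \<open>b\<close> no larger than for independent copies; only the \<open>1/(NM)\<close> term \<open>s\<close> may grow.
\<close>

abbreviation E :: "'a pmf \<Rightarrow> ('a \<Rightarrow> real) \<Rightarrow> real" where
  "E p f \<equiv> measure_pmf.expectation p f"

lemma finite_set_Pi_pmf:
  assumes "finite A" "\<And>x. finite (set_pmf (p x))"
  shows "finite (set_pmf (Pi_pmf A d p))"
  using assms by (subst set_Pi_pmf) (auto intro!: finite_PiE_dflt)

lemma expectation_finite_pmf:
  "finite (set_pmf p) \<Longrightarrow> E p f = (\<Sum>x\<in>set_pmf p. f x * pmf p x)"
  by (rule integral_measure_pmf_real) auto

lemma expectation_pair_pmf_iterated:
  assumes p: "finite (set_pmf p)" and q: "finite (set_pmf q)"
  shows "E (pair_pmf p q) f = E p (\<lambda>x. E q (\<lambda>y. f (x, y)))"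
proof -
  have "E (pair_pmf p q) f = (\<Sum>z\<in>set_pmf p \<times> set_pmf q. f z * pmf (pair_pmf p q) z)"
    using assms by (simp add: expectation_finite_pmf)
  also have "\<dots> = (\<Sum>x\<in>set_pmf p. \<Sum>y\<in>set_pmf q. f (x, y) * (pmf p x * pmf q y))"
    by (simp add: sum.cartesian_product) (intro sum.cong, auto simp: pmf_pair)
  also have "\<dots> = (\<Sum>x\<in>set_pmf p. (\<Sum>y\<in>set_pmf q. f (x, y) * pmf q y) * pmf p x)"
    unfolding sum_distrib_right by (simp add: mult_ac)
  also have "\<dots> = E p (\<lambda>x. E q (\<lambda>y. f (x, y)))"
    using assms by (simp add: expectation_finite_pmf)
  finally show ?thesis .
qed

lemma expectation_iterated_swap:
  assumes "finite (set_pmf p)" "finite (set_pmf q)"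
  shows "E p (\<lambda>x. E q (f x)) = E q (\<lambda>y. E p (\<lambda>x. f x y))"
proof -
  have "E p (\<lambda>x. E q (f x)) = E (pair_pmf p q) (\<lambda>z. f (fst z) (snd z))"
    using assms by (simp add: expectation_pair_pmf_iterated)
  also have "\<dots> = E (pair_pmf q p) (\<lambda>z. f (snd z) (fst z))"
    by (subst pair_commute_pmf) (simp add: case_prod_unfold)
  also have "\<dots> = E q (\<lambda>y. E p (\<lambda>x. f x y))"
    using assms by (simp add: expectation_pair_pmf_iterated)
  finally show ?thesis .
qed

lemma expectation_sum_Pi_pmf:
  assumes "finite A" "finite (set_pmf \<mu>)"
  shows "E (Pi_pmf A d (\<lambda>_. \<mu>)) (\<lambda>x. \<Sum>i\<in>A. \<phi> (x i)) = card A * E \<mu> \<phi>"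
proof -
  have "E (Pi_pmf A d (\<lambda>_. \<mu>)) (\<lambda>x. \<phi> (x i)) = E \<mu> \<phi>" if "i \<in> A" for i
    using Pi_pmf_component[OF assms(1), of i d "\<lambda>_. \<mu>"] that
    by (metis integral_map_pmf)
  then show ?thesis
    using assms by (simp add: Bochner_Integration.integral_sum integrable_measure_pmf_finite
        finite_set_Pi_pmf)
qed

lemma second_moment_sum_Pi_pmf:
  assumes "finite A" and \<mu>: "finite (set_pmf \<mu>)"
  shows "E (Pi_pmf A d (\<lambda>_. \<mu>)) (\<lambda>x. (\<Sum>i\<in>A. \<phi> (x i))\<^sup>2)
           = card A * E \<mu> (\<lambda>y. (\<phi> y)\<^sup>2) + card A * (real (card A) - 1) * (E \<mu> \<phi>)\<^sup>2"
  using assms(1)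
proof (induction A rule: finite_induct)
  case empty
  then show ?case by simp
next
  case (insert i A)
  let ?P = "Pi_pmf A d (\<lambda>_. \<mu>)" and ?S = "\<lambda>f. \<Sum>p\<in>A. \<phi> (f p)"
  have P: "finite (set_pmf ?P)" using insert(1) \<mu> by (rule finite_set_Pi_pmf)
  have sum_upd: "(\<Sum>p\<in>A. \<phi> ((f(i:=y)) p)) = ?S f" for f y
    using insert(2) by (intro sum.cong) auto
  have mean: "E ?P ?S = card A * E \<mu> \<phi>"
    using insert(1) \<mu> by (rule expectation_sum_Pi_pmf)
  have "E (Pi_pmf (insert i A) d (\<lambda>_. \<mu>)) (\<lambda>x. (\<Sum>p\<in>insert i A. \<phi> (x p))\<^sup>2)
      = E \<mu> (\<lambda>y. E ?P (\<lambda>f. (\<phi> y)\<^sup>2 + 2 * \<phi> y * ?S f + (?S f)\<^sup>2))"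
    using insert(1,2) \<mu> P
    by (simp add: Pi_pmf_insert expectation_pair_pmf_iterated sum_upd power2_sum add_ac
        fun_upd_same del: fun_upd_apply)
  also have "\<dots> = E \<mu> (\<lambda>y. (\<phi> y)\<^sup>2 + \<phi> y * (2 * card A * E \<mu> \<phi>)
      + (card A * E \<mu> (\<lambda>y. (\<phi> y)\<^sup>2) + card A * (real (card A) - 1) * (E \<mu> \<phi>)\<^sup>2))"
    using P by (simp add: integrable_measure_pmf_finite mean insert(3) algebra_simps)
  also have "\<dots> = card (insert i A) * E \<mu> (\<lambda>y. (\<phi> y)\<^sup>2)
      + card (insert i A) * (real (card (insert i A)) - 1) * (E \<mu> \<phi>)\<^sup>2"
    using insert(1,2) \<mu> by (simp add: integrable_measure_pmf_finite algebra_simps power2_eq_square)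
  finally show ?case .
qed

lemma expectation_second_moment_sum_Pi_pmf:
  fixes F :: "'a \<Rightarrow> 'b \<Rightarrow> real"
  assumes A: "finite A" and \<mu>: "finite (set_pmf \<mu>)" and \<nu>: "finite (set_pmf \<nu>)"
  shows "E (Pi_pmf A d (\<lambda>_. \<mu>)) (\<lambda>x. E \<nu> (\<lambda>v. (\<Sum>p\<in>A. F (x p) v)\<^sup>2))
       = card A * E \<mu> (\<lambda>u. E \<nu> (\<lambda>v. (F u v)\<^sup>2))
         + card A * (real (card A) - 1) * E \<nu> (\<lambda>v. (E \<mu> (\<lambda>u. F u v))\<^sup>2)"
proof -
  let ?X = "Pi_pmf A d (\<lambda>_. \<mu>)"
  have "E ?X (\<lambda>x. E \<nu> (\<lambda>v. (\<Sum>p\<in>A. F (x p) v)\<^sup>2)) = E \<nu> (\<lambda>v. E ?X (\<lambda>x. (\<Sum>p\<in>A. F (x p) v)\<^sup>2))"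
    using finite_set_Pi_pmf[OF A \<mu>] \<nu> by (rule expectation_iterated_swap)
  also have "\<dots> = E \<nu> (\<lambda>v. card A * E \<mu> (\<lambda>u. (F u v)\<^sup>2)
                    + card A * (real (card A) - 1) * (E \<mu> (\<lambda>u. F u v))\<^sup>2)"
    by (intro arg_cong[where f="E \<nu>"] ext second_moment_sum_Pi_pmf[OF A \<mu>])
  also have "\<dots> = card A * E \<mu> (\<lambda>u. E \<nu> (\<lambda>v. (F u v)\<^sup>2))
                 + card A * (real (card A) - 1) * E \<nu> (\<lambda>v. (E \<mu> (\<lambda>u. F u v))\<^sup>2)"
    using \<mu> \<nu> by (simp add: integrable_measure_pmf_finite expectation_iterated_swap[of \<nu> \<mu>])
  finally show ?thesis .
qed

definition two_sample_sum :: "'i set \<Rightarrow> 'j set \<Rightarrow> ('a \<Rightarrow> 'b \<Rightarrow> real) \<Rightarrow> ('i \<Rightarrow> 'a) \<times> ('j \<Rightarrow> 'b) \<Rightarrow> real"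
  where "two_sample_sum A B F z = (\<Sum>p\<in>A. \<Sum>q\<in>B. F (fst z p) (snd z q))"

lemma moments_two_sample_sum:
  fixes F :: "'a \<Rightarrow> 'b \<Rightarrow> real" and d :: 'a and d' :: 'b
  assumes A: "finite A" and B: "finite B" and \<mu>: "finite (set_pmf \<mu>)" and \<nu>: "finite (set_pmf \<nu>)"
  defines "P \<equiv> pair_pmf (Pi_pmf A d (\<lambda>_. \<mu>)) (Pi_pmf B d' (\<lambda>_. \<nu>))"
    and "S \<equiv> two_sample_sum A B F"
    and "m \<equiv> E \<mu> (\<lambda>u. E \<nu> (F u))"
    and "s \<equiv> E \<mu> (\<lambda>u. E \<nu> (\<lambda>v. (F u v)\<^sup>2))"
    and "a \<equiv> E \<mu> (\<lambda>u. (E \<nu> (F u))\<^sup>2)"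
    and "b \<equiv> E \<nu> (\<lambda>v. (E \<mu> (\<lambda>u. F u v))\<^sup>2)"
  shows "E P S = real (card A) * card B * m"
    and "E P (\<lambda>z. (S z)\<^sup>2) = real (card A) * card B *
           (s + (real (card A) - 1) * b + (real (card B) - 1) * a + (real (card A) - 1) * (real (card B) - 1) * m\<^sup>2)"
proof -
  let ?X = "Pi_pmf A d (\<lambda>_. \<mu>)" and ?Y = "Pi_pmf B d' (\<lambda>_. \<nu>)"
  have X: "finite (set_pmf ?X)" using A \<mu> by (rule finite_set_Pi_pmf)
  have Y: "finite (set_pmf ?Y)" using B \<nu> by (rule finite_set_Pi_pmf)
  define G where "G = (\<lambda>x v. \<Sum>p\<in>A. F (x p) v)"
  define H where "H = (\<lambda>u. E \<nu> (F u))"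
  have S_G: "S (x, y) = (\<Sum>q\<in>B. G x (y q))" for x y
    unfolding S_def two_sample_sum_def G_def by (simp add: sum.swap[of _ A])
  have E_G: "E \<nu> (G x) = (\<Sum>p\<in>A. H (x p))" for x
    unfolding G_def H_def using \<nu> by (simp add: integrable_measure_pmf_finite)
  have H1: "E ?X (\<lambda>x. \<Sum>p\<in>A. H (x p)) = card A * m"
    unfolding m_def H_def using A \<mu> by (rule expectation_sum_Pi_pmf)
  have H2: "E ?X (\<lambda>x. (\<Sum>p\<in>A. H (x p))\<^sup>2) = card A * a + card A * (real (card A) - 1) * m\<^sup>2"
    unfolding m_def a_def H_def using A \<mu> by (rule second_moment_sum_Pi_pmf)
  have G2: "E ?X (\<lambda>x. E \<nu> (\<lambda>v. (G x v)\<^sup>2)) = card A * s + card A * (real (card A) - 1) * b"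
    unfolding G_def s_def b_def using A \<mu> \<nu> by (rule expectation_second_moment_sum_Pi_pmf)
  show "E P S = real (card A) * card B * m"
    unfolding P_def expectation_pair_pmf_iterated[OF X Y] S_G
    using expectation_sum_Pi_pmf[OF B \<nu>] by (simp add: E_G H1)
  show "E P (\<lambda>z. (S z)\<^sup>2) = real (card A) * card B *
           (s + (real (card A) - 1) * b + (real (card B) - 1) * a + (real (card A) - 1) * (real (card B) - 1) * m\<^sup>2)"
  proof -
    have inner: "E ?Y (\<lambda>y. (S (x, y))\<^sup>2) = card B * E \<nu> (\<lambda>v. (G x v)\<^sup>2)
            + card B * (real (card B) - 1) * (\<Sum>p\<in>A. H (x p))\<^sup>2" for x
      unfolding S_G E_G[symmetric] by (rule second_moment_sum_Pi_pmf[OF B \<nu>])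
    have "E P (\<lambda>z. (S z)\<^sup>2) = E ?X (\<lambda>x. card B * E \<nu> (\<lambda>v. (G x v)\<^sup>2)
            + card B * (real (card B) - 1) * (\<Sum>p\<in>A. H (x p))\<^sup>2)"
      unfolding P_def expectation_pair_pmf_iterated[OF X Y] inner ..
    also have "\<dots> = card B * (card A * s + card A * (real (card A) - 1) * b)
            + card B * (real (card B) - 1) * (card A * a + card A * (real (card A) - 1) * m\<^sup>2)"
      using X by (simp add: integrable_measure_pmf_finite G2 H2)
    finally show ?thesis by (simp add: algebra_simps)
  qed
qed

lemma variance_scaled_finite_pmf:
  assumes "finite (set_pmf P)"
  shows "measure_pmf.variance P (\<lambda>z. c * S z) = c\<^sup>2 * (E P (\<lambda>z. (S z)\<^sup>2) - (E P S)\<^sup>2)"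
proof -
  have "measure_pmf.variance P (\<lambda>z. c * S z) = E P (\<lambda>z. (c * S z)\<^sup>2) - (E P (\<lambda>z. c * S z))\<^sup>2"
    using assms by (intro measure_pmf.variance_eq integrable_measure_pmf_finite)
  then show ?thesis by (simp add: power_mult_distrib algebra_simps)
qed

lemma variance_two_sample_sum_le:
  fixes F :: "'a \<Rightarrow> 'b \<Rightarrow> real" and G :: "'c \<Rightarrow> 'd \<Rightarrow> real"
  assumes A: "finite A" and B: "finite B"
    and \<mu>: "finite (set_pmf \<mu>)" and \<nu>: "finite (set_pmf \<nu>)"
    and \<mu>': "finite (set_pmf \<mu>')" and \<nu>': "finite (set_pmf \<nu>')"
    and mean: "E \<mu> (\<lambda>u. E \<nu> (F u)) = E \<mu>' (\<lambda>u. E \<nu>' (G u))"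
    and fst_cond: "E \<mu> (\<lambda>u. (E \<nu> (F u))\<^sup>2) \<le> E \<mu>' (\<lambda>u. (E \<nu>' (G u))\<^sup>2)"
    and snd_cond: "E \<nu> (\<lambda>v. (E \<mu> (\<lambda>u. F u v))\<^sup>2) \<le> E \<nu>' (\<lambda>v. (E \<mu>' (\<lambda>u. G u v))\<^sup>2)"
  shows "measure_pmf.variance (pair_pmf (Pi_pmf A d (\<lambda>_. \<mu>)) (Pi_pmf B e (\<lambda>_. \<nu>)))
           (\<lambda>z. c * two_sample_sum A B F z)
       \<le> measure_pmf.variance (pair_pmf (Pi_pmf A d' (\<lambda>_. \<mu>')) (Pi_pmf B e' (\<lambda>_. \<nu>')))
           (\<lambda>z. c * two_sample_sum A B G z)
         + c\<^sup>2 * card A * card B * (E \<mu> (\<lambda>u. E \<nu> (\<lambda>v. (F u v)\<^sup>2)) - E \<mu>' (\<lambda>u. E \<nu>' (\<lambda>v. (G u v)\<^sup>2)))"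
    (is "?V \<le> ?V' + c\<^sup>2 * _ * _ * (?s - ?s')")
proof -
  let ?N = "real (card A)" and ?M = "real (card B)"
  let ?a = "E \<mu> (\<lambda>u. (E \<nu> (F u))\<^sup>2)" and ?a' = "E \<mu>' (\<lambda>u. (E \<nu>' (G u))\<^sup>2)"
  let ?b = "E \<nu> (\<lambda>v. (E \<mu> (\<lambda>u. F u v))\<^sup>2)" and ?b' = "E \<nu>' (\<lambda>v. (E \<mu>' (\<lambda>u. G u v))\<^sup>2)"
  let ?m = "E \<mu> (\<lambda>u. E \<nu> (F u))"
  have nonneg: "0 \<le> real k * (real k - 1)" for k :: nat
    by (cases k) auto
  have "?V = c\<^sup>2 * (?N * ?M * (?s + (?N - 1) * ?b + (?M - 1) * ?a + (?N - 1) * (?M - 1) * ?m\<^sup>2)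
      - (?N * ?M * ?m)\<^sup>2)"
    using A B \<mu> \<nu> by (subst variance_scaled_finite_pmf) (simp_all add: finite_set_Pi_pmf moments_two_sample_sum)
  moreover have "?V' = c\<^sup>2 * (?N * ?M * (?s' + (?N - 1) * ?b' + (?M - 1) * ?a' + (?N - 1) * (?M - 1) * ?m\<^sup>2)
      - (?N * ?M * ?m)\<^sup>2)"
    unfolding mean using A B \<mu>' \<nu>'
    by (subst variance_scaled_finite_pmf) (simp_all add: finite_set_Pi_pmf moments_two_sample_sum)
  ultimately have "?V = ?V' + c\<^sup>2 * ?N * ?M * (?s - ?s')
      + c\<^sup>2 * (?M * (?N * (?N - 1)) * (?b - ?b') + ?N * (?M * (?M - 1)) * (?a - ?a'))"
    by (simp add: algebra_simps)
  moreover have "c\<^sup>2 * (?M * (?N * (?N - 1)) * (?b - ?b') + ?N * (?M * (?M - 1)) * (?a - ?a')) \<le> 0"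
    using fst_cond snd_cond nonneg
    by (intro mult_nonneg_nonpos add_nonpos_nonpos zero_le_power2) (auto intro!: mult_nonneg_nonpos)
  ultimately show ?thesis by linarith
qed

definition discordant_pairs :: "nat \<Rightarrow> (nat \<Rightarrow> nat) \<Rightarrow> (nat \<Rightarrow> nat) \<Rightarrow> (nat \<times> nat) set" where
  "discordant_pairs n \<sigma> \<tau> = {(x, y). x \<in> {1..n} \<and> y \<in> {1..n} \<and> x < y \<and>
     (int (inv \<sigma> x) - int (inv \<sigma> y)) * (int (inv \<tau> x) - int (inv \<tau> y)) < 0}"

definition ordered_discordant_pairs :: "nat \<Rightarrow> (nat \<Rightarrow> nat) \<Rightarrow> (nat \<Rightarrow> nat) \<Rightarrow> (nat \<times> nat) set" where
  "ordered_discordant_pairs n \<sigma> \<tau> = {(x, y). x \<in> {1..n} \<and> y \<in> {1..n} \<and> x \<noteq> y \<and>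
     (int (inv \<sigma> x) - int (inv \<sigma> y)) * (int (inv \<tau> x) - int (inv \<tau> y)) < 0}"

lemma kendall_eq_card_discordant_pairs: "kendall n \<sigma> \<tau> = card (discordant_pairs n \<sigma> \<tau>)"
  unfolding kendall_def discordant_pairs_def by simp

lemma finite_discordant_pairs: "finite (discordant_pairs n \<sigma> \<tau>)"
  by (rule finite_subset[of _ "{1..n} \<times> {1..n}"]) (auto simp: discordant_pairs_def)

lemma kendall_sym: "kendall n \<sigma> \<tau> = kendall n \<tau> \<sigma>"
  unfolding kendall_def by (simp add: mult.commute)

lemma discordant_iff:
  fixes a b c d :: nat
  assumes "a \<noteq> b" "c \<noteq> d"
  shows "(int a - int b) * (int c - int d) < 0 \<longleftrightarrow> (a < b) \<noteq> (c < d)"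
  using assms by (auto simp: mult_less_0_iff)

lemma card_ordered_discordant_pairs:
  "card (ordered_discordant_pairs n \<sigma> \<tau>) = 2 * kendall n \<sigma> \<tau>"
proof -
  let ?D = "discordant_pairs n \<sigma> \<tau>"
  have flip: "(int a - int b) * (int c - int d) = (int b - int a) * (int d - int c)" for a b c d
    by (simp add: algebra_simps)
  have "(x, y) \<in> ordered_discordant_pairs n \<sigma> \<tau> \<longleftrightarrow> (x, y) \<in> ?D \<or> (y, x) \<in> ?D" for x y
    unfolding ordered_discordant_pairs_def discordant_pairs_def
    using flip[of "inv \<sigma> x" "inv \<sigma> y" "inv \<tau> x" "inv \<tau> y"] by (auto simp: linorder_neq_iff)
  moreover have "prod.swap ` ?D = {(x, y). (y, x) \<in> ?D}"
    by force
  ultimately have "ordered_discordant_pairs n \<sigma> \<tau> = ?D \<union> prod.swap ` ?D"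
    by auto
  moreover have "?D \<inter> prod.swap ` ?D = {}"
    by (auto simp: discordant_pairs_def)
  moreover have "card (prod.swap ` ?D) = card ?D"
    by (metis card_image inj_on_def swap_swap)
  ultimately show ?thesis
    by (simp add: card_Un_disjoint finite_discordant_pairs kendall_eq_card_discordant_pairs)
qed

lemma kendall_relabel:
  assumes g: "g permutes {1..n}" and \<sigma>: "\<sigma> permutes {1..n}" and \<tau>: "\<tau> permutes {1..n}"
  shows "kendall n (g \<circ> \<sigma>) (g \<circ> \<tau>) = kendall n \<sigma> \<tau>"
proof -
  let ?D = "ordered_discordant_pairs n"
  have inv_comp: "inv (g \<circ> \<rho>) = inv \<rho> \<circ> inv g" if "\<rho> permutes {1..n}" for \<rho>
    using permutes_bij[OF g] permutes_bij[OF that] by (simp add: o_inv_distrib)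
  have g_inv: "g (inv g x) = x" "inv g (g x) = x" for x
    using g by (simp_all add: permutes_inverses)
  have inv_g_range: "inv g x \<in> {1..n} \<longleftrightarrow> x \<in> {1..n}" for x
    using permutes_in_image[OF permutes_inv[OF g]] by blast
  have inv_g_eq: "inv g x = inv g y \<longleftrightarrow> x = y" for x y
    by (metis g_inv(1))
  have mem: "(x, y) \<in> ?D (g \<circ> \<sigma>) (g \<circ> \<tau>) \<longleftrightarrow> (inv g x, inv g y) \<in> ?D \<sigma> \<tau>" for x y
    unfolding ordered_discordant_pairs_def inv_comp[OF \<sigma>] inv_comp[OF \<tau>]
    using inv_g_range[of x] inv_g_range[of y] by (auto simp: inv_g_eq)
  have "?D (g \<circ> \<sigma>) (g \<circ> \<tau>) = map_prod g g ` ?D \<sigma> \<tau>"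
  proof (intro set_eqI iffI)
    fix z assume z: "z \<in> ?D (g \<circ> \<sigma>) (g \<circ> \<tau>)"
    obtain x y where "z = (x, y)" by (cases z)
    with z show "z \<in> map_prod g g ` ?D \<sigma> \<tau>"
      by (intro rev_image_eqI[of "(inv g x, inv g y)"]) (auto simp: mem g_inv)
  qed (auto simp: mem g_inv)
  moreover have "inj (map_prod g g)"
    using permutes_inj[OF g] by (simp add: prod.inj_map)
  ultimately have "card (?D (g \<circ> \<sigma>) (g \<circ> \<tau>)) = card (?D \<sigma> \<tau>)"
    by (simp add: card_image inj_on_subset)
  then show ?thesis by (simp add: card_ordered_discordant_pairs)
qed

abbreviation adjacent_swap :: "nat \<Rightarrow> nat \<Rightarrow> nat" where
  "adjacent_swap j \<equiv> Transposition.transpose j (Suc j)"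

lemma card_toggle_one:
  assumes "finite D" "finite D'" "\<And>z. z \<noteq> p \<Longrightarrow> z \<in> D' \<longleftrightarrow> z \<in> D"
    and "p \<in> D' \<longleftrightarrow> b" "p \<in> D \<longleftrightarrow> \<not> b"
  shows "real (card D') = real (card D) + (if b then 1 else -1)"
proof (cases b)
  case True
  then have "D' = insert p D" using assms(3-5) by (intro set_eqI) (metis insert_iff)
  then show ?thesis using True assms by simp
next
  case False
  then have "D = insert p D'" using assms(3-5) by (intro set_eqI) (metis insert_iff)
  then show ?thesis using False assms by simp
qed

lemma adjacent_swap_less_iff:
  fixes x y j :: nat
  assumes "x \<noteq> y" "{x, y} \<noteq> {j, Suc j}"
  shows "adjacent_swap j x < adjacent_swap j y \<longleftrightarrow> x < y"
  using assms unfolding Transposition.transpose_def by auto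

lemma inv_comp_adjacent_swap:
  assumes "\<sigma> permutes S"
  shows "inv (\<sigma> \<circ> adjacent_swap j) z = adjacent_swap j (inv \<sigma> z)"
  using permutes_bij[OF assms] by (simp add: o_inv_distrib)

lemma mem_discordant_pairs_comp_adjacent_swap:
  assumes \<sigma>: "\<sigma> permutes {1..n}" and \<tau>: "\<tau> permutes {1..n}"
    and z: "z \<noteq> (min (\<sigma> j) (\<sigma> (Suc j)), max (\<sigma> j) (\<sigma> (Suc j)))"
  shows "z \<in> discordant_pairs n (\<sigma> \<circ> adjacent_swap j) \<tau> \<longleftrightarrow> z \<in> discordant_pairs n \<sigma> \<tau>"
proof -
  obtain x y where xy: "z = (x, y)" by (cases z)
  show ?thesis
  proof (cases "x \<in> {1..n} \<and> y \<in> {1..n} \<and> x < y")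
    case False then show ?thesis unfolding discordant_pairs_def xy by blast
  next
    case True
    have not_swapped: "{inv \<sigma> x, inv \<sigma> y} \<noteq> {j, Suc j}"
    proof
      assume "{inv \<sigma> x, inv \<sigma> y} = {j, Suc j}"
      then have "(inv \<sigma> x = j \<and> inv \<sigma> y = Suc j) \<or> (inv \<sigma> x = Suc j \<and> inv \<sigma> y = j)"
        by (simp add: doubleton_eq_iff)
      then have "(x = \<sigma> j \<and> y = \<sigma> (Suc j)) \<or> (x = \<sigma> (Suc j) \<and> y = \<sigma> j)"
        using permutes_inverses(1)[OF \<sigma>] by metis
      then show False using z True by (auto simp: xy)
    qed
    have i1: "inv \<sigma> x \<noteq> inv \<sigma> y" and i2: "inv \<tau> x \<noteq> inv \<tau> y"
      using True permutes_inj[OF permutes_inv[OF \<sigma>]] permutes_inj[OF permutes_inv[OF \<tau>]]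
      by (auto dest: injD)
    have i3: "adjacent_swap j (inv \<sigma> x) \<noteq> adjacent_swap j (inv \<sigma> y)"
      using i1 by (metis Transposition.transpose_involutory)
    show ?thesis using True
      by (simp add: discordant_pairs_def xy inv_comp_adjacent_swap[OF \<sigma>] discordant_iff[OF i1 i2]
          discordant_iff[OF i3 i2] adjacent_swap_less_iff[OF i1 not_swapped])
  qed
qed

lemma kendall_comp_adjacent_swap:
  assumes \<sigma>: "\<sigma> permutes {1..n}" and \<tau>: "\<tau> permutes {1..n}" and j: "1 \<le> j" "Suc j \<le> n"
  shows "real (kendall n (\<sigma> \<circ> adjacent_swap j) \<tau>) = real (kendall n \<sigma> \<tau>) +
     (if inv \<tau> (\<sigma> j) < inv \<tau> (\<sigma> (Suc j)) then 1 else -1)"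
proof -
  let ?u = "\<sigma> j" and ?v = "\<sigma> (Suc j)" and ?D = "discordant_pairs n"
  let ?b = "inv \<tau> ?u < inv \<tau> ?v"
  define p where "p = (min ?u ?v, max ?u ?v)"
  have uv: "?u \<noteq> ?v" using permutes_inj[OF \<sigma>] by (metis injD n_not_Suc_n)
  have \<tau>_uv: "inv \<tau> ?u \<noteq> inv \<tau> ?v"
    using permutes_inj[OF permutes_inv[OF \<tau>]] uv by (auto dest: injD)
  have inv_uv: "inv \<sigma> ?u = j" "inv \<sigma> ?v = Suc j" using \<sigma> by (auto simp: permutes_inverses)
  have uv_range: "?u \<in> {1..n}" "?v \<in> {1..n}"
    using j by (simp_all only: permutes_in_image[OF \<sigma>]) auto
  have "p \<in> ?D (\<sigma> \<circ> adjacent_swap j) \<tau> \<longleftrightarrow> ?b" "p \<in> ?D \<sigma> \<tau> \<longleftrightarrow> \<not> ?b"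
    using uv_range \<tau>_uv uv
    by (cases "?u < ?v"; auto simp: discordant_pairs_def p_def inv_comp_adjacent_swap[OF \<sigma>] inv_uv
        discordant_iff min_def max_def)+
  then show ?thesis unfolding kendall_eq_card_discordant_pairs
    by (intro card_toggle_one[OF finite_discordant_pairs finite_discordant_pairs
          mem_discordant_pairs_comp_adjacent_swap[OF \<sigma> \<tau>]]) (simp_all add: p_def)
qed

lemma topk_permutes: "\<sigma> \<in> topk n k a \<Longrightarrow> \<sigma> permutes {1..n}"
  by (simp add: topk_def)

lemma topk_prefix: "\<sigma> \<in> topk n k a \<Longrightarrow> i \<in> {1..k} \<Longrightarrow> \<sigma> i = a i"
  by (simp add: topk_def)

lemma finite_topk: "finite (topk n k a)"
  by (rule finite_subset[OF _ finite_permutations[of "{1..n}"]]) (auto simp: topk_def)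

lemma topk_nonempty:
  assumes "topk_valid n k a"
  shows "topk n k a \<noteq> {}"
proof -
  have kn: "k \<le> n" and inj_a: "inj_on a {1..k}" and range_a: "a ` {1..k} \<subseteq> {1..n}"
    using assms by (auto simp: topk_valid_def)
  let ?T = "{Suc k..n}" and ?S = "{1..n} - a ` {1..k}"
  have "card ?S = n - k"
    using card_Diff_subset[OF finite_imageI range_a] card_image[OF inj_a] by simp
  then have "card ?T = card ?S" by simp
  then obtain g where g: "bij_betw g ?T ?S" using finite_same_card_bij by blast
  define \<sigma> where "\<sigma> = (\<lambda>i. if i \<in> {1..k} then a i else if i \<in> ?T then g i else i)"
  have "bij_betw \<sigma> {1..k} (a ` {1..k})"
    using inj_a by (subst bij_betw_cong[where g=a]) (auto simp: \<sigma>_def inj_on_imp_bij_betw)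
  moreover have "bij_betw \<sigma> ?T ?S"
    using g by (subst bij_betw_cong[where g=g]) (auto simp: \<sigma>_def)
  ultimately have "bij_betw \<sigma> ({1..k} \<union> ?T) (a ` {1..k} \<union> ?S)"
    by (rule bij_betw_combine) auto
  moreover have "{1..k} \<union> ?T = {1..n}" "a ` {1..k} \<union> ?S = {1..n}"
    using kn range_a by auto
  moreover have "\<sigma> x = x" if "x \<notin> {1..n}" for x
    using that kn by (auto simp: \<sigma>_def)
  ultimately have "\<sigma> permutes {1..n}"
    by (intro bij_imp_permutes) simp_all
  then have "\<sigma> \<in> topk n k a" by (simp add: topk_def \<sigma>_def)
  then show ?thesis by blast
qed

definition tail_reversal :: "nat \<Rightarrow> nat \<Rightarrow> nat \<Rightarrow> nat" where
  "tail_reversal n k i = (if i \<in> {Suc k..n} then n + Suc k - i else i)"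

lemma tail_reversal_involution: "tail_reversal n k (tail_reversal n k i) = i"
  unfolding tail_reversal_def by auto

lemma tail_reversal_permutes: "tail_reversal n k permutes {1..n}"
  unfolding permutes_def
proof (intro conjI allI impI)
  fix x assume "x \<notin> {1..n}" then show "tail_reversal n k x = x" by (auto simp: tail_reversal_def)
next
  fix y show "\<exists>!x. tail_reversal n k x = y"
    by (rule ex1I[of _ "tail_reversal n k y"]) (metis tail_reversal_involution)+
qed

lemma antithetic_eq_comp_tail_reversal:
  assumes "\<sigma> \<in> topk n k a"
  shows "antithetic n k a \<sigma> = \<sigma> \<circ> tail_reversal n k"
proof
  fix i
  show "antithetic n k a \<sigma> i = (\<sigma> \<circ> tail_reversal n k) i"
  proof (cases "i \<in> {1..k}")
    case True then show ?thesis
      using topk_prefix[OF assms True] by (auto simp: antithetic_def tail_reversal_def)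
  next
    case out_prefix: False
    show ?thesis
    proof (cases "i \<in> {k+1..n}")
      case True
      then have "n + 1 - (i - k) = n + Suc k - i" by auto
      then show ?thesis using out_prefix True by (auto simp: antithetic_def tail_reversal_def)
    next
      case False
      then have "i \<notin> {1..n}" using out_prefix by auto
      then show ?thesis using out_prefix False topk_permutes[OF assms]
        by (auto simp: antithetic_def tail_reversal_def permutes_not_in)
    qed
  qed
qed

lemma comp_tail_reversal_in_topk:
  assumes "\<sigma> \<in> topk n k a"
  shows "\<sigma> \<circ> tail_reversal n k \<in> topk n k a"
proof -
  have "\<sigma> \<circ> tail_reversal n k permutes {1..n}"
    by (rule permutes_compose[OF tail_reversal_permutes topk_permutes[OF assms]])
  moreover have "(\<sigma> \<circ> tail_reversal n k) i = a i" if "i \<in> {1..k}" for i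
    using that topk_prefix[OF assms that] by (simp add: tail_reversal_def)
  ultimately show ?thesis by (simp add: topk_def)
qed

lemma bij_betw_antithetic: "bij_betw (antithetic n k a) (topk n k a) (topk n k a)"
proof -
  have involution: "\<forall>x\<in>topk n k a. antithetic n k a (antithetic n k a x) = x"
    by (auto simp: antithetic_eq_comp_tail_reversal comp_tail_reversal_in_topk
        o_assoc[symmetric] tail_reversal_involution fun_eq_iff)
  have into: "antithetic n k a ` topk n k a \<subseteq> topk n k a"
    by (auto simp: antithetic_eq_comp_tail_reversal comp_tail_reversal_in_topk)
  from involution involution into into show ?thesis
    by (rule bij_betw_byWitness)
qed

lemma topk_comp_adjacent_swap:
  assumes \<sigma>: "\<sigma> \<in> topk n k a" and j: "k < j" "Suc j \<le> n"
  shows "\<sigma> \<circ> adjacent_swap j \<in> topk n k a"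
proof -
  have "adjacent_swap j permutes {1..n}" using j by (intro permutes_swap_id) auto
  then have "\<sigma> \<circ> adjacent_swap j permutes {1..n}" using topk_permutes[OF \<sigma>] by (rule permutes_compose)
  moreover have "(\<sigma> \<circ> adjacent_swap j) i = a i" if "i \<in> {1..k}" for i
    using that j topk_prefix[OF \<sigma> that] by (simp add: Transposition.transpose_def)
  ultimately show ?thesis by (simp add: topk_def)
qed

lemma increasing_chain_add_le:
  fixes f :: "nat \<Rightarrow> nat"
  assumes "\<And>j. i \<le> j \<Longrightarrow> Suc j \<le> n \<Longrightarrow> f j < f (Suc j)"
  shows "i + t \<le> n \<Longrightarrow> f i + t \<le> f (i + t)"
proof (induction t)
  case (Suc t)
  then show ?case using assms[of "i + t"] by simp
qed simp

lemma permutes_increasing_on_tail_eq_id: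
  assumes f: "f permutes {1..n}" and prefix: "\<And>i. i \<in> {1..k} \<Longrightarrow> f i = i"
    and mono: "\<And>j. Suc k \<le> j \<Longrightarrow> Suc j \<le> n \<Longrightarrow> f j < f (Suc j)"
  shows "f = id"
proof
  fix j
  have range: "f j \<in> {1..n}" if "j \<in> {1..n}" for j using permutes_in_image[OF f] that by blast
  have tail: "k < f j" if "j \<in> {Suc k..n}" for j
  proof (rule ccontr)
    assume "\<not> k < f j"
    then have "f (f j) = f j" using range[of j] that by (intro prefix) auto
    then have "f j = j" using permutes_inj[OF f] by (auto dest: injD)
    then show False using that \<open>\<not> k < f j\<close> by simp
  qed
  show "f j = id j"
  proof (cases "j \<in> {Suc k..n}")
    case True
    have "f (Suc k) + (j - Suc k) \<le> f j"
      using increasing_chain_add_le[of "Suc k" n f "j - Suc k"] mono True by auto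
    moreover have "f j + (n - j) \<le> f n"
      using increasing_chain_add_le[of j n f "n - j"] mono True by auto
    moreover have "Suc k \<le> f (Suc k)" "f n \<le> n" using tail[of "Suc k"] range[of n] True by auto
    ultimately show ?thesis using True by auto
  next
    case False
    then show ?thesis using prefix permutes_not_in[OF f] by (cases "j \<in> {1..k}") auto
  qed
qed

lemma topk_tail_descent:
  assumes \<sigma>: "\<sigma> \<in> topk n k a" and \<sigma>0: "\<sigma>0 \<in> topk n k a" and "\<sigma> \<noteq> \<sigma>0"
  shows "\<exists>j. k < j \<and> Suc j \<le> n \<and> \<not> inv \<sigma>0 (\<sigma> j) < inv \<sigma>0 (\<sigma> (Suc j))"
proof (rule ccontr)
  assume no_descent: "\<not> ?thesis"
  define f where "f = inv \<sigma>0 \<circ> \<sigma>"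
  have p0: "\<sigma>0 permutes {1..n}" using \<sigma>0 by (rule topk_permutes)
  have "f permutes {1..n}"
    unfolding f_def by (rule permutes_compose[OF topk_permutes[OF \<sigma>] permutes_inv[OF p0]])
  moreover have "f i = i" if "i \<in> {1..k}" for i
    using topk_prefix[OF \<sigma> that] topk_prefix[OF \<sigma>0 that] permutes_inverses(2)[OF p0, of i]
    by (simp add: f_def)
  moreover have "f j < f (Suc j)" if "Suc k \<le> j" "Suc j \<le> n" for j
    using no_descent that by (auto simp: f_def)
  ultimately have "f = id" by (rule permutes_increasing_on_tail_eq_id)
  moreover have "\<sigma> = \<sigma>0 \<circ> f" by (simp add: f_def fun_eq_iff permutes_inverses(1)[OF p0])
  ultimately show False using \<open>\<sigma> \<noteq> \<sigma>0\<close> by simp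
qed

lemma topk_tail_swap_invariant:
  assumes \<sigma>0: "\<sigma>0 \<in> topk n k a"
    and swap: "\<And>\<sigma> j. \<sigma> \<in> topk n k a \<Longrightarrow> k < j \<Longrightarrow> Suc j \<le> n \<Longrightarrow> Q (\<sigma> \<circ> adjacent_swap j) = Q \<sigma>"
    and \<sigma>: "\<sigma> \<in> topk n k a"
  shows "Q \<sigma> = Q \<sigma>0"
  using \<sigma>
proof (induction "kendall n \<sigma> \<sigma>0" arbitrary: \<sigma> rule: less_induct)
  case less
  show ?case
  proof (cases "\<sigma> = \<sigma>0")
    case False
    then obtain j where j: "k < j" "Suc j \<le> n" "\<not> inv \<sigma>0 (\<sigma> j) < inv \<sigma>0 (\<sigma> (Suc j))"
      using topk_tail_descent[OF less.prems \<sigma>0] by blast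
    have "real (kendall n (\<sigma> \<circ> adjacent_swap j) \<sigma>0) = real (kendall n \<sigma> \<sigma>0) - 1"
      using kendall_comp_adjacent_swap[OF topk_permutes[OF less.prems] topk_permutes[OF \<sigma>0], of j] j
      by simp
    then have "Q (\<sigma> \<circ> adjacent_swap j) = Q \<sigma>0"
      using less.hyps topk_comp_adjacent_swap[OF less.prems j(1,2)] by simp
    then show ?thesis using swap[OF less.prems j(1,2)] by simp
  qed simp
qed

definition mallows_mean :: "real \<Rightarrow> nat \<Rightarrow> (nat \<Rightarrow> nat) set \<Rightarrow> (nat \<Rightarrow> nat) \<Rightarrow> real" where
  "mallows_mean lam n R \<sigma> = (\<Sum>\<tau>\<in>R. mallows lam n \<sigma> \<tau>) / card R"

lemma mallows_mean_nonneg: "mallows_mean lam n R \<sigma> \<ge> 0"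
  unfolding mallows_mean_def mallows_def by (intro divide_nonneg_nonneg sum_nonneg) simp_all

lemma expectation_mallows_pmf_of_set:
  "finite R \<Longrightarrow> R \<noteq> {} \<Longrightarrow> E (pmf_of_set R) (mallows lam n \<sigma>) = mallows_mean lam n R \<sigma>"
  by (simp add: integral_pmf_of_set mallows_mean_def)

lemma mallows_mean_shift:
  assumes "\<And>\<tau>. \<tau> \<in> R \<Longrightarrow> real (kendall n \<sigma>' \<tau>) = real (kendall n \<sigma> \<tau>) + e"
  shows "mallows_mean lam n R \<sigma>' = exp (- lam * e) * mallows_mean lam n R \<sigma>"
proof -
  have "(\<Sum>\<tau>\<in>R. mallows lam n \<sigma>' \<tau>) = exp (- lam * e) * (\<Sum>\<tau>\<in>R. mallows lam n \<sigma> \<tau>)"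
    unfolding mallows_def sum_distrib_left
    by (intro sum.cong refl) (simp add: assms algebra_simps flip: exp_add)
  then show ?thesis by (simp add: mallows_mean_def)
qed

lemma mallows_mean_relabel:
  assumes g: "g permutes {1..n}" and g_prefix: "\<And>i. i \<in> {1..k} \<Longrightarrow> g (a i) = a i"
    and g_involution: "g \<circ> g = id" and \<rho>: "\<rho> permutes {1..n}"
  shows "mallows_mean lam n (topk n k a) (g \<circ> \<rho>) = mallows_mean lam n (topk n k a) \<rho>"
proof -
  let ?R = "topk n k a"
  have g_R: "g \<circ> \<tau> \<in> ?R" if "\<tau> \<in> ?R" for \<tau>
    using permutes_compose[OF topk_permutes[OF that] g] topk_prefix[OF that] g_prefix
    by (simp add: topk_def)
  have gg: "g \<circ> (g \<circ> \<tau>) = \<tau>" for \<tau> by (simp add: o_assoc g_involution)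
  have "(\<Sum>\<tau>\<in>?R. mallows lam n (g \<circ> \<rho>) \<tau>) = (\<Sum>\<tau>\<in>?R. mallows lam n (g \<circ> \<rho>) (g \<circ> \<tau>))"
    by (rule sum.reindex_bij_witness[of _ "\<lambda>\<tau>. g \<circ> \<tau>" "\<lambda>\<tau>. g \<circ> \<tau>"]) (auto simp: gg g_R)
  also have "\<dots> = (\<Sum>\<tau>\<in>?R. mallows lam n \<rho> \<tau>)"
    unfolding mallows_def by (intro sum.cong refl) (simp add: kendall_relabel[OF g \<rho> topk_permutes])
  finally show ?thesis by (simp add: mallows_mean_def)
qed

lemma comp_adjacent_swap_eq_transpose_comp:
  assumes "inj \<rho>"
  shows "\<rho> \<circ> adjacent_swap j = Transposition.transpose (\<rho> j) (\<rho> (Suc j)) \<circ> \<rho>"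
proof
  fix i
  show "(\<rho> \<circ> adjacent_swap j) i = (Transposition.transpose (\<rho> j) (\<rho> (Suc j)) \<circ> \<rho>) i"
  proof (cases "i = j \<or> i = Suc j")
    case True then show ?thesis by auto
  next
    case False
    then have "\<rho> i \<noteq> \<rho> j" "\<rho> i \<noteq> \<rho> (Suc j)" using assms by (metis injD)+
    then show ?thesis using False by simp
  qed
qed

lemma adjacent_swap_comp_tail_reversal:
  assumes "k < j" "Suc j \<le> n"
  shows "adjacent_swap j \<circ> tail_reversal n k = tail_reversal n k \<circ> adjacent_swap (n + k - j)"
proof
  fix i
  let ?r = "tail_reversal n k" and ?j = "n + k - j"
  have r: "?r j = Suc ?j" "?r (Suc j) = ?j" using assms by (auto simp: tail_reversal_def)
  then have r': "?r (Suc ?j) = j" "?r ?j = Suc j" by (metis tail_reversal_involution)+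
  show "(adjacent_swap j \<circ> ?r) i = (?r \<circ> adjacent_swap ?j) i"
  proof (cases "i = ?j \<or> i = Suc ?j")
    case True then show ?thesis using r' by auto
  next
    case False
    then have "?r i \<noteq> j" "?r i \<noteq> Suc j" using r tail_reversal_involution by metis+
    then show ?thesis using False by simp
  qed
qed

lemma topk_inv_prefix:
  assumes "\<tau> \<in> topk n k a" "i \<in> {1..k}"
  shows "inv \<tau> (a i) = i"
  using topk_prefix[OF assms] permutes_inverses(2)[OF topk_permutes[OF assms(1)]] by metis

lemma topk_inv_tail:
  assumes \<tau>: "\<tau> \<in> topk n k a" and "x \<in> {1..n}" "x \<notin> a ` {1..k}"
  shows "k < inv \<tau> x"
proof (rule ccontr)
  have p: "\<tau> permutes {1..n}" using \<tau> by (rule topk_permutes)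
  assume "\<not> k < inv \<tau> x"
  moreover have "inv \<tau> x \<in> {1..n}" using assms(2) permutes_in_image[OF permutes_inv[OF p]] by blast
  ultimately have "inv \<tau> x \<in> {1..k}" by auto
  moreover have "x = a (inv \<tau> x)"
    using topk_prefix[OF \<tau> \<open>inv \<tau> x \<in> {1..k}\<close>] permutes_inverses(1)[OF p] by metis
  ultimately show False using assms(3) by blast
qed

lemma topk_order_prefix_item:
  assumes "u \<in> {1..n}" "v \<in> {1..n}" "u \<in> a ` {1..k} \<or> v \<in> a ` {1..k}"
    and \<tau>: "\<tau> \<in> topk n k a" and \<tau>': "\<tau>' \<in> topk n k a"
  shows "inv \<tau> u < inv \<tau> v \<longleftrightarrow> inv \<tau>' u < inv \<tau>' v"
proof (cases "u \<in> a ` {1..k}")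
  case True
  then obtain p where p: "p \<in> {1..k}" "u = a p" by blast
  show ?thesis
  proof (cases "v \<in> a ` {1..k}")
    case True
    then obtain q where q: "q \<in> {1..k}" "v = a q" by blast
    show ?thesis using p q topk_inv_prefix[OF \<tau>] topk_inv_prefix[OF \<tau>'] by simp
  next
    case False
    then show ?thesis using p topk_inv_prefix[OF \<tau> p(1)] topk_inv_prefix[OF \<tau>' p(1)]
        topk_inv_tail[OF \<tau> assms(2)] topk_inv_tail[OF \<tau>' assms(2)] by auto
  qed
next
  case False
  then have "v \<in> a ` {1..k}" using assms(3) by blast
  then obtain q where q: "q \<in> {1..k}" "v = a q" by blast
  show ?thesis using q topk_inv_prefix[OF \<tau> q(1)] topk_inv_prefix[OF \<tau>' q(1)]
      topk_inv_tail[OF \<tau> assms(1) False] topk_inv_tail[OF \<tau>' assms(1) False] by auto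
qed

lemma mallows_mean_comp_adjacent_swap_tail_items:
  assumes \<rho>: "\<rho> permutes {1..n}" and j: "1 \<le> j" "Suc j \<le> n"
    and tail: "\<rho> j \<notin> a ` {1..k}" "\<rho> (Suc j) \<notin> a ` {1..k}"
  shows "mallows_mean lam n (topk n k a) (\<rho> \<circ> adjacent_swap j) = mallows_mean lam n (topk n k a) \<rho>"
proof -
  let ?g = "Transposition.transpose (\<rho> j) (\<rho> (Suc j))"
  have "\<rho> j \<in> {1..n}" "\<rho> (Suc j) \<in> {1..n}"
    using j by (simp_all only: permutes_in_image[OF \<rho>]) auto
  then have "?g permutes {1..n}" by (rule permutes_swap_id)
  moreover have "?g (a i) = a i" if "i \<in> {1..k}" for i
    using tail that by (metis Transposition.transpose_apply_other imageI)
  ultimately show ?thesis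
    unfolding comp_adjacent_swap_eq_transpose_comp[OF permutes_inj[OF \<rho>]]
    using \<rho> by (intro mallows_mean_relabel) simp_all
qed

lemma mallows_mean_comp_adjacent_swap_prefix_item:
  assumes \<rho>: "\<rho> permutes {1..n}" and j: "1 \<le> j" "Suc j \<le> n" and \<tau>0: "\<tau>0 \<in> topk n k a"
    and prefix: "\<rho> j \<in> a ` {1..k} \<or> \<rho> (Suc j) \<in> a ` {1..k}"
  shows "mallows_mean lam n (topk n k a) (\<rho> \<circ> adjacent_swap j)
       = exp (- lam * (if inv \<tau>0 (\<rho> j) < inv \<tau>0 (\<rho> (Suc j)) then 1 else -1))
         * mallows_mean lam n (topk n k a) \<rho>"
proof (rule mallows_mean_shift)
  fix \<tau> assume \<tau>: "\<tau> \<in> topk n k a"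
  have "\<rho> j \<in> {1..n}" "\<rho> (Suc j) \<in> {1..n}"
    using j by (simp_all only: permutes_in_image[OF \<rho>]) auto
  then have "inv \<tau> (\<rho> j) < inv \<tau> (\<rho> (Suc j)) \<longleftrightarrow> inv \<tau>0 (\<rho> j) < inv \<tau>0 (\<rho> (Suc j))"
    using prefix \<tau> \<tau>0 by (rule topk_order_prefix_item)
  then show "real (kendall n (\<rho> \<circ> adjacent_swap j) \<tau>) = real (kendall n \<rho> \<tau>)
      + (if inv \<tau>0 (\<rho> j) < inv \<tau>0 (\<rho> (Suc j)) then 1 else -1)"
    using kendall_comp_adjacent_swap[OF \<rho> topk_permutes[OF \<tau>] j] by simp
qed

lemma mallows_mean_product_opposite_swaps:
  fixes lam :: real and k :: nat and a :: "nat \<Rightarrow> nat"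
  assumes \<rho>: "\<rho> permutes {1..n}" and \<rho>': "\<rho>' permutes {1..n}"
    and j: "1 \<le> j" "Suc j \<le> n" and j': "1 \<le> j'" "Suc j' \<le> n"
    and opposite: "\<rho>' j' = \<rho> (Suc j)" "\<rho>' (Suc j') = \<rho> j"
  defines "h \<equiv> mallows_mean lam n (topk n k a)"
  shows "h (\<rho> \<circ> adjacent_swap j) * h (\<rho>' \<circ> adjacent_swap j') = h \<rho> * h \<rho>'"
proof (cases "\<rho> j \<in> a ` {1..k} \<or> \<rho> (Suc j) \<in> a ` {1..k}")
  case prefix: True
  show ?thesis
  proof (cases "topk n k a = {}")
    case True then show ?thesis by (simp add: h_def mallows_mean_def)
  next
    case False
    then obtain \<tau>0 where \<tau>0: "\<tau>0 \<in> topk n k a" by blast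
    define e where "e = (if inv \<tau>0 (\<rho> j) < inv \<tau>0 (\<rho> (Suc j)) then 1 else -1 :: real)"
    have "inv \<tau>0 (\<rho> j) \<noteq> inv \<tau>0 (\<rho> (Suc j))"
      using permutes_inj[OF \<rho>] permutes_inj[OF permutes_inv[OF topk_permutes[OF \<tau>0]]]
      by (metis injD n_not_Suc_n)
    then have sign: "(if inv \<tau>0 (\<rho>' j') < inv \<tau>0 (\<rho>' (Suc j')) then 1 else -1) = - e"
      by (auto simp: opposite e_def)
    have "h (\<rho> \<circ> adjacent_swap j) = exp (- lam * e) * h \<rho>"
      unfolding h_def e_def using prefix
      by (rule mallows_mean_comp_adjacent_swap_prefix_item[OF \<rho> j \<tau>0])
    moreover have "h (\<rho>' \<circ> adjacent_swap j') = exp (- lam * - e) * h \<rho>'"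
      unfolding h_def sign[symmetric] using prefix
      by (intro mallows_mean_comp_adjacent_swap_prefix_item[OF \<rho>' j' \<tau>0]) (auto simp: opposite)
    ultimately have "h (\<rho> \<circ> adjacent_swap j) * h (\<rho>' \<circ> adjacent_swap j')
        = (exp (- lam * e) * exp (- lam * - e)) * (h \<rho> * h \<rho>')"
      by simp
    then show ?thesis by (simp flip: exp_add)
  qed
next
  case False
  then show ?thesis using j j' opposite unfolding h_def
    by (simp add: mallows_mean_comp_adjacent_swap_tail_items[OF \<rho>]
        mallows_mean_comp_adjacent_swap_tail_items[OF \<rho>'])
qed

lemma mallows_mean_reversal_product_tail_swap:
  fixes lam :: real and k2 :: nat and a2 :: "nat \<Rightarrow> nat"
  assumes \<sigma>: "\<sigma> \<in> topk n k1 a1" and j: "k1 < j" "Suc j \<le> n"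
  defines "h \<equiv> mallows_mean lam n (topk n k2 a2)" and "r \<equiv> tail_reversal n k1"
  shows "h (\<sigma> \<circ> adjacent_swap j) * h (\<sigma> \<circ> adjacent_swap j \<circ> r) = h \<sigma> * h (\<sigma> \<circ> r)"
proof -
  define j' where "j' = n + k1 - j"
  have "r j' = Suc j" "r (Suc j') = j" using j by (auto simp: r_def tail_reversal_def j'_def)
  moreover have "\<sigma> \<circ> adjacent_swap j \<circ> r = \<sigma> \<circ> r \<circ> adjacent_swap j'"
    unfolding j'_def r_def by (simp add: comp_assoc adjacent_swap_comp_tail_reversal[OF j])
  moreover have "\<sigma> permutes {1..n}" "\<sigma> \<circ> r permutes {1..n}"
    unfolding r_def using topk_permutes \<sigma> comp_tail_reversal_in_topk[OF \<sigma>] by blast+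
  moreover have "1 \<le> j'" "Suc j' \<le> n" using j by (auto simp: j'_def)
  ultimately show ?thesis
    unfolding h_def using j by (simp add: mallows_mean_product_opposite_swaps)
qed

lemma mallows_mean_antithetic_product_const:
  "\<exists>c. \<forall>\<sigma>\<in>topk n k1 a1.
     mallows_mean lam n (topk n k2 a2) \<sigma> * mallows_mean lam n (topk n k2 a2) (antithetic n k1 a1 \<sigma>) = c"
proof (cases "topk n k1 a1 = {}")
  case False
  then obtain \<sigma>0 where \<sigma>0: "\<sigma>0 \<in> topk n k1 a1" by blast
  define Q where "Q = (\<lambda>\<sigma>. mallows_mean lam n (topk n k2 a2) \<sigma>
                         * mallows_mean lam n (topk n k2 a2) (\<sigma> \<circ> tail_reversal n k1))"
  have "Q \<sigma> = Q \<sigma>0" if "\<sigma> \<in> topk n k1 a1" for \<sigma>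
    using \<sigma>0 _ that unfolding Q_def
    by (rule topk_tail_swap_invariant) (rule mallows_mean_reversal_product_tail_swap)
  then show ?thesis by (auto simp: Q_def antithetic_eq_comp_tail_reversal)
qed simp

lemma expectation_pmf_of_set_bij:
  assumes "finite R" "R \<noteq> {}" "bij_betw A R R"
  shows "E (pmf_of_set R) (\<lambda>x. f (A x)) = E (pmf_of_set R) f"
  using assms by (simp add: integral_pmf_of_set sum.reindex_bij_betw)

lemma expectation_product_const_le_square:
  fixes h :: "'a \<Rightarrow> real"
  assumes R: "finite R" "R \<noteq> {}" and A: "bij_betw A R R"
    and h: "\<And>x. x \<in> R \<Longrightarrow> h x \<ge> 0" and c: "\<And>x. x \<in> R \<Longrightarrow> h x * h (A x) = c"
  shows "E (pmf_of_set R) (\<lambda>x. h x * h (A x)) \<le> (E (pmf_of_set R) h)\<^sup>2"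
proof -
  have A_R: "A x \<in> R" if "x \<in> R" for x using A that by (auto simp: bij_betw_def)
  obtain x0 where x0: "x0 \<in> R" using R by blast
  have "0 \<le> h x0 * h (A x0)" using x0 by (intro mult_nonneg_nonneg h A_R)
  then have "c \<ge> 0" using c[OF x0] by linarith
  have "sqrt c \<le> (h x + h (A x)) / 2" if "x \<in> R" for x
    using arith_geo_mean_sqrt[OF h[OF that] h[OF A_R[OF that]]] c[OF that] by simp
  then have "(\<Sum>x\<in>R. sqrt c) \<le> (\<Sum>x\<in>R. (h x + h (A x)) / 2)" by (rule sum_mono)
  also have "\<dots> = ((\<Sum>x\<in>R. h x) + (\<Sum>x\<in>R. h (A x))) / 2"
    by (simp add: sum.distrib sum_divide_distrib[symmetric])
  also have "(\<Sum>x\<in>R. h (A x)) = (\<Sum>x\<in>R. h x)" using A by (rule sum.reindex_bij_betw)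
  finally have "sqrt c \<le> E (pmf_of_set R) h"
    using R by (simp add: integral_pmf_of_set field_simps card_gt_0_iff)
  then have "(sqrt c)\<^sup>2 \<le> (E (pmf_of_set R) h)\<^sup>2"
    using \<open>c \<ge> 0\<close> by (intro power_mono) simp_all
  moreover have "E (pmf_of_set R) (\<lambda>x. h x * h (A x)) = c"
    using R c by (simp add: integral_pmf_of_set)
  ultimately show ?thesis using \<open>c \<ge> 0\<close> by simp
qed

lemma antithetic_mean_eq_independent:
  fixes h :: "'a \<Rightarrow> real"
  assumes R: "finite R" "R \<noteq> {}" and A: "bij_betw A R R"
  shows "E (pmf_of_set R) (\<lambda>x. h x + h (A x))
       = E (pair_pmf (pmf_of_set R) (pmf_of_set R)) (\<lambda>z. h (fst z) + h (snd z))"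
  using R expectation_pmf_of_set_bij[OF R A, of h]
  by (simp add: integrable_measure_pmf_finite)

lemma antithetic_second_moment_le_independent:
  fixes h :: "'a \<Rightarrow> real"
  assumes R: "finite R" "R \<noteq> {}" and A: "bij_betw A R R"
    and h: "\<And>x. x \<in> R \<Longrightarrow> h x \<ge> 0" and c: "\<And>x. x \<in> R \<Longrightarrow> h x * h (A x) = c"
  shows "E (pmf_of_set R) (\<lambda>x. (h x + h (A x))\<^sup>2)
       \<le> E (pair_pmf (pmf_of_set R) (pmf_of_set R)) (\<lambda>z. (h (fst z) + h (snd z))\<^sup>2)"
proof -
  let ?U = "pmf_of_set R"
  have U: "finite (set_pmf ?U)" using R by simp
  have "E ?U (\<lambda>x. (h x + h (A x))\<^sup>2) = 2 * E ?U (\<lambda>x. (h x)\<^sup>2) + 2 * E ?U (\<lambda>x. h x * h (A x))"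
    using U expectation_pmf_of_set_bij[OF R A, of "\<lambda>x. (h x)\<^sup>2"]
    by (simp add: power2_sum integrable_measure_pmf_finite mult.assoc)
  also have "\<dots> \<le> 2 * E ?U (\<lambda>x. (h x)\<^sup>2) + 2 * (E ?U h)\<^sup>2"
    using expectation_product_const_le_square[where h=h and A=A and c=c, OF R A h c] by simp
  also have "\<dots> = E (pair_pmf ?U ?U) (\<lambda>z. (h (fst z) + h (snd z))\<^sup>2)"
  proof -
    have "E (pair_pmf ?U ?U) (\<lambda>z. h (fst z) * h (snd z)) = (E ?U h)\<^sup>2"
      using U by (simp add: expectation_pair_pmf_iterated power2_eq_square)
    then show ?thesis
      using U expectation_pair_pmf_fst[of ?U ?U "\<lambda>x. (h x)\<^sup>2"]
        expectation_pair_pmf_snd[of ?U ?U "\<lambda>x. (h x)\<^sup>2"]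
      by (simp add: power2_sum integrable_measure_pmf_finite mult.assoc)
  qed
  finally show ?thesis .
qed

lemma mallows_sym: "mallows lam n \<sigma> \<tau> = mallows lam n \<tau> \<sigma>"
  by (simp add: mallows_def kendall_sym)

definition antithetic_kernel ::
    "real \<Rightarrow> nat \<Rightarrow> nat \<Rightarrow> (nat \<Rightarrow> nat) \<Rightarrow> nat \<Rightarrow> (nat \<Rightarrow> nat) \<Rightarrow> (nat \<Rightarrow> nat) \<Rightarrow> (nat \<Rightarrow> nat) \<Rightarrow> real" where
  "antithetic_kernel lam n k1 a1 k2 a2 \<sigma> \<tau> =
     mallows lam n \<sigma> \<tau> + mallows lam n (antithetic n k1 a1 \<sigma>) \<tau>
     + mallows lam n \<sigma> (antithetic n k2 a2 \<tau>) + mallows lam n (antithetic n k1 a1 \<sigma>) (antithetic n k2 a2 \<tau>)"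

definition iid_kernel ::
    "real \<Rightarrow> nat \<Rightarrow> (nat \<Rightarrow> nat) \<times> (nat \<Rightarrow> nat) \<Rightarrow> (nat \<Rightarrow> nat) \<times> (nat \<Rightarrow> nat) \<Rightarrow> real" where
  "iid_kernel lam n x y = mallows lam n (fst x) (fst y) + mallows lam n (snd x) (fst y)
     + mallows lam n (fst x) (snd y) + mallows lam n (snd x) (snd y)"

lemma antithetic_kernel_swap:
  "antithetic_kernel lam n k1 a1 k2 a2 \<sigma> \<tau> = antithetic_kernel lam n k2 a2 k1 a1 \<tau> \<sigma>"
  unfolding antithetic_kernel_def by (simp add: mallows_sym)

lemma iid_kernel_swap: "iid_kernel lam n x y = iid_kernel lam n y x"
  unfolding iid_kernel_def by (simp add: mallows_sym)

lemma expectation_antithetic_kernel: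
  assumes "topk_valid n k2 a2"
  shows "E (pmf_of_set (topk n k2 a2)) (antithetic_kernel lam n k1 a1 k2 a2 \<sigma>)
       = 2 * (mallows_mean lam n (topk n k2 a2) \<sigma> + mallows_mean lam n (topk n k2 a2) (antithetic n k1 a1 \<sigma>))"
proof -
  let ?R = "topk n k2 a2"
  have R: "finite ?R" "?R \<noteq> {}" using finite_topk topk_nonempty[OF assms] by blast+
  have "E (pmf_of_set ?R) (\<lambda>\<tau>. mallows lam n \<rho> (antithetic n k2 a2 \<tau>)) = mallows_mean lam n ?R \<rho>" for \<rho>
    using expectation_pmf_of_set_bij[OF R bij_betw_antithetic, of "mallows lam n \<rho>"]
    by (simp add: expectation_mallows_pmf_of_set[OF R])
  then show ?thesis
    using R unfolding antithetic_kernel_def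
    by (simp add: integrable_measure_pmf_finite expectation_mallows_pmf_of_set)
qed

lemma expectation_iid_kernel:
  assumes "topk_valid n k2 a2"
  shows "E (pair_pmf (pmf_of_set (topk n k2 a2)) (pmf_of_set (topk n k2 a2))) (iid_kernel lam n x)
       = 2 * (mallows_mean lam n (topk n k2 a2) (fst x) + mallows_mean lam n (topk n k2 a2) (snd x))"
proof -
  let ?R = "topk n k2 a2"
  have R: "finite ?R" "?R \<noteq> {}" using finite_topk topk_nonempty[OF assms] by blast+
  then show ?thesis unfolding iid_kernel_def
    by (simp add: integrable_measure_pmf_finite expectation_mallows_pmf_of_set expectation_pair_pmf_iterated)
qed

lemma antithetic_kernel_mean_eq_iid:
  assumes "topk_valid n k1 a1" "topk_valid n k2 a2"
  defines "U1 \<equiv> pmf_of_set (topk n k1 a1)" and "U2 \<equiv> pmf_of_set (topk n k2 a2)"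
  shows "E U1 (\<lambda>\<sigma>. E U2 (antithetic_kernel lam n k1 a1 k2 a2 \<sigma>))
       = E (pair_pmf U1 U1) (\<lambda>x. E (pair_pmf U2 U2) (iid_kernel lam n x))"
proof -
  have R: "finite (topk n k1 a1)" "topk n k1 a1 \<noteq> {}"
    using finite_topk topk_nonempty[OF assms(1)] by blast+
  show ?thesis
    unfolding U1_def U2_def expectation_antithetic_kernel[OF assms(2)] expectation_iid_kernel[OF assms(2)]
      distrib_left
    by (rule antithetic_mean_eq_independent[OF R bij_betw_antithetic])
qed

lemma antithetic_kernel_second_moment_le_iid:
  assumes "topk_valid n k1 a1" "topk_valid n k2 a2"
  defines "U1 \<equiv> pmf_of_set (topk n k1 a1)" and "U2 \<equiv> pmf_of_set (topk n k2 a2)"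
  shows "E U1 (\<lambda>\<sigma>. (E U2 (antithetic_kernel lam n k1 a1 k2 a2 \<sigma>))\<^sup>2)
       \<le> E (pair_pmf U1 U1) (\<lambda>x. (E (pair_pmf U2 U2) (iid_kernel lam n x))\<^sup>2)"
proof -
  let ?h = "\<lambda>\<sigma>. 2 * mallows_mean lam n (topk n k2 a2) \<sigma>"
  have R: "finite (topk n k1 a1)" "topk n k1 a1 \<noteq> {}"
    using finite_topk topk_nonempty[OF assms(1)] by blast+
  obtain c where c: "\<forall>\<sigma>\<in>topk n k1 a1. mallows_mean lam n (topk n k2 a2) \<sigma>
      * mallows_mean lam n (topk n k2 a2) (antithetic n k1 a1 \<sigma>) = c"
    using mallows_mean_antithetic_product_const by (rule exE)
  have "?h \<sigma> * ?h (antithetic n k1 a1 \<sigma>) = 4 * c" if "\<sigma> \<in> topk n k1 a1" for \<sigma>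
  proof -
    have prod: "mallows_mean lam n (topk n k2 a2) \<sigma> * mallows_mean lam n (topk n k2 a2) (antithetic n k1 a1 \<sigma>) = c"
      using c that by (rule bspec)
    show ?thesis by (simp add: algebra_simps flip: prod)
  qed
  then show ?thesis
    unfolding U1_def U2_def expectation_antithetic_kernel[OF assms(2)] expectation_iid_kernel[OF assms(2)]
      distrib_left
    by (intro antithetic_second_moment_le_independent[OF R bij_betw_antithetic]) (auto intro: mallows_mean_nonneg)
qed

lemma antithetic_kernel_snd_second_moment_le_iid:
  assumes "topk_valid n k1 a1" "topk_valid n k2 a2"
  defines "U1 \<equiv> pmf_of_set (topk n k1 a1)" and "U2 \<equiv> pmf_of_set (topk n k2 a2)"
  shows "E U2 (\<lambda>\<tau>. (E U1 (\<lambda>\<sigma>. antithetic_kernel lam n k1 a1 k2 a2 \<sigma> \<tau>))\<^sup>2)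
       \<le> E (pair_pmf U2 U2) (\<lambda>y. (E (pair_pmf U1 U1) (\<lambda>x. iid_kernel lam n x y))\<^sup>2)"
proof -
  have "(\<lambda>\<sigma>. antithetic_kernel lam n k1 a1 k2 a2 \<sigma> \<tau>) = antithetic_kernel lam n k2 a2 k1 a1 \<tau>"
    "(\<lambda>x. iid_kernel lam n x y) = iid_kernel lam n y" for \<tau> y
    by (simp_all add: fun_eq_iff antithetic_kernel_swap[of _ _ k1] iid_kernel_swap[of _ _ _ y])
  then show ?thesis
    unfolding U1_def U2_def using antithetic_kernel_second_moment_le_iid[OF assms(2,1)] by simp
qed

lemma pair_Pi_pmf_eq_map_Pi_pmf_pair:
  assumes I: "finite I"
  shows "pair_pmf (Pi_pmf I d p) (Pi_pmf I d' q) =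
    map_pmf (\<lambda>z. (fst \<circ> z, snd \<circ> z)) (Pi_pmf I (d, d') (\<lambda>i. pair_pmf (p i) (q i)))"
proof (rule pmf_eqI)
  fix w :: "('a \<Rightarrow> 'b) \<times> ('a \<Rightarrow> 'c)"
  obtain f g where w: "w = (f, g)" by (cases w)
  define zipped where "zipped = (\<lambda>i. (f i, g i))"
  have unzip: "inj (\<lambda>z :: 'a \<Rightarrow> 'b \<times> 'c. (fst \<circ> z, snd \<circ> z))"
    by (rule injI) (simp add: fun_eq_iff prod_eq_iff)
  have "w = (fst \<circ> zipped, snd \<circ> zipped)" by (simp add: w zipped_def o_def)
  then have "pmf (map_pmf (\<lambda>z. (fst \<circ> z, snd \<circ> z)) (Pi_pmf I (d, d') (\<lambda>i. pair_pmf (p i) (q i)))) w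
      = pmf (Pi_pmf I (d, d') (\<lambda>i. pair_pmf (p i) (q i))) zipped"
    by (simp only: pmf_map_inj'[OF unzip])
  also have "\<dots> = pmf (pair_pmf (Pi_pmf I d p) (Pi_pmf I d' q)) w"
    using I by (auto simp: w pmf_pair pmf_Pi zipped_def prod.distrib)
  finally show "pmf (pair_pmf (Pi_pmf I d p) (Pi_pmf I d' q)) w = pmf (map_pmf (\<lambda>z. (fst \<circ> z, snd \<circ> z))
      (Pi_pmf I (d, d') (\<lambda>i. pair_pmf (p i) (q i)))) w" ..
qed

definition unzip_samples ::
    "(nat \<Rightarrow> 'a \<times> 'a) \<times> (nat \<Rightarrow> 'b \<times> 'b) \<Rightarrow> ((nat \<Rightarrow> 'a) \<times> (nat \<Rightarrow> 'a)) \<times> ((nat \<Rightarrow> 'b) \<times> (nat \<Rightarrow> 'b))" where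
  "unzip_samples z = ((fst \<circ> fst z, snd \<circ> fst z), (fst \<circ> snd z, snd \<circ> snd z))"

lemma iid_dist_eq_map_unzip_samples:
  "iid_dist n k1 a1 k2 a2 N M = map_pmf unzip_samples (pair_pmf
     (Pi_pmf {1..N} (undefined, undefined) (\<lambda>_. pair_pmf (pmf_of_set (topk n k1 a1)) (pmf_of_set (topk n k1 a1))))
     (Pi_pmf {1..M} (undefined, undefined) (\<lambda>_. pair_pmf (pmf_of_set (topk n k2 a2)) (pmf_of_set (topk n k2 a2)))))"
  unfolding iid_dist_def iid_samples_def pair_Pi_pmf_eq_map_Pi_pmf_pair[OF finite_atLeastAtMost]
    map_pair[symmetric]
  by (simp add: pmf.map_comp o_def unzip_samples_def[abs_def] case_prod_unfold)

lemma iid_est_unzip_samples: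
  "iid_est lam n N M (unzip_samples z)
     = 1 / (4 * real N * real M) * two_sample_sum {1..N} {1..M} (iid_kernel lam n) z"
  by (simp add: iid_est_def unzip_samples_def Khat_def two_sample_sum_def iid_kernel_def)

lemma anti_est_eq_two_sample_sum:
  "anti_est lam n k1 a1 k2 a2 N M
     = (\<lambda>z. 1 / (4 * real N * real M) * two_sample_sum {1..N} {1..M} (antithetic_kernel lam n k1 a1 k2 a2) z)"
  by (auto simp: anti_est_def Khat_def two_sample_sum_def antithetic_kernel_def fun_eq_iff)

lemma V_anti_eq_variance_two_sample_sum:
  "V_anti lam n k1 a1 k2 a2 N M = measure_pmf.variance
     (pair_pmf (Pi_pmf {1..N} undefined (\<lambda>_. pmf_of_set (topk n k1 a1)))
               (Pi_pmf {1..M} undefined (\<lambda>_. pmf_of_set (topk n k2 a2))))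
     (\<lambda>z. 1 / (4 * real N * real M) * two_sample_sum {1..N} {1..M} (antithetic_kernel lam n k1 a1 k2 a2) z)"
  unfolding V_anti_def anti_dist_def iid_samples_def anti_est_eq_two_sample_sum ..

lemma V_iid_eq_variance_two_sample_sum:
  "V_iid lam n k1 a1 k2 a2 N M = measure_pmf.variance
     (pair_pmf (Pi_pmf {1..N} (undefined, undefined) (\<lambda>_. pair_pmf (pmf_of_set (topk n k1 a1)) (pmf_of_set (topk n k1 a1))))
               (Pi_pmf {1..M} (undefined, undefined) (\<lambda>_. pair_pmf (pmf_of_set (topk n k2 a2)) (pmf_of_set (topk n k2 a2)))))
     (\<lambda>z. 1 / (4 * real N * real M) * two_sample_sum {1..N} {1..M} (iid_kernel lam n) z)"
  unfolding V_iid_def iid_dist_eq_map_unzip_samples by (simp only: integral_map_pmf iid_est_unzip_samples)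

theorem theorem5:
  fixes lam :: real and n k1 k2 :: nat and a1 a2 :: "nat \<Rightarrow> nat"
  assumes "lam > 0"
    and "topk_valid n k1 a1" and "topk_valid n k2 a2"
  shows "(\<forall>N M. N \<ge> 1 \<longrightarrow> M \<ge> 1 \<longrightarrow>
            measure_pmf.expectation (anti_dist n k1 a1 k2 a2 N M) (anti_est lam n k1 a1 k2 a2 N M)
          = measure_pmf.expectation (iid_dist n k1 a1 k2 a2 N M) (iid_est lam n N M))
       \<and> (\<exists>C::real. \<forall>N M. N \<ge> 1 \<longrightarrow> M \<ge> 1 \<longrightarrow>
            V_anti lam n k1 a1 k2 a2 N M \<le> V_iid lam n k1 a1 k2 a2 N M + C / (real N * real M))"
proof -
  let ?U1 = "pmf_of_set (topk n k1 a1)" and ?U2 = "pmf_of_set (topk n k2 a2)"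
  let ?F = "antithetic_kernel lam n k1 a1 k2 a2" and ?G = "iid_kernel lam n"
  have U: "finite (set_pmf ?U1)" "finite (set_pmf ?U2)"
    "finite (set_pmf (pair_pmf ?U1 ?U1))" "finite (set_pmf (pair_pmf ?U2 ?U2))"
    using finite_topk topk_nonempty assms(2,3) by simp_all
  note mean = antithetic_kernel_mean_eq_iid[OF assms(2,3)]
  let ?s = "E ?U1 (\<lambda>u. E ?U2 (\<lambda>v. (?F u v)\<^sup>2))"
    and ?s' = "E (pair_pmf ?U1 ?U1) (\<lambda>u. E (pair_pmf ?U2 ?U2) (\<lambda>v. (?G u v)\<^sup>2))"
  show ?thesis
  proof (intro conjI exI[of _ "(?s - ?s') / 16"] allI impI)
    fix N M :: nat
    show "E (anti_dist n k1 a1 k2 a2 N M) (anti_est lam n k1 a1 k2 a2 N M)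
        = E (iid_dist n k1 a1 k2 a2 N M) (iid_est lam n N M)"
      by (simp add: anti_dist_def iid_samples_def anti_est_eq_two_sample_sum iid_dist_eq_map_unzip_samples
          iid_est_unzip_samples moments_two_sample_sum U mean)
  next
    fix N M :: nat assume "1 \<le> N" "1 \<le> M"
    have "V_anti lam n k1 a1 k2 a2 N M \<le> V_iid lam n k1 a1 k2 a2 N M
        + (1 / (4 * real N * real M))\<^sup>2 * card {1..N} * card {1..M} * (?s - ?s')"
      unfolding V_anti_eq_variance_two_sample_sum V_iid_eq_variance_two_sample_sum
      by (rule variance_two_sample_sum_le[OF finite_atLeastAtMost finite_atLeastAtMost U mean
            antithetic_kernel_second_moment_le_iid[OF assms(2,3)]
            antithetic_kernel_snd_second_moment_le_iid[OF assms(2,3)]])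
    then show "V_anti lam n k1 a1 k2 a2 N M \<le> V_iid lam n k1 a1 k2 a2 N M + (?s - ?s') / 16 / (real N * real M)"
      using \<open>1 \<le> N\<close> \<open>1 \<le> M\<close> by (simp add: power2_eq_square field_simps)
  qed
qed

end
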